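(* Let $\mathrm{Pr}_T(x)$ be a provability predicate of $T$ satisfying condition $\mathbf{M}$. Then $\mathsf{MN}\subseteq \mathsf{PL}(\mathrm{Pr}_T)$. Furthermore, $\mathrm{Pr}_T(x)$ satisfies condition $\mathbf{D3}$ if and only if $\mathsf{MNF}\subseteq\mathsf{PL}(\mathrm{Pr}_T)$.
   Context: $T$ is a primitive recursively axiomatized consistent extension of Peano Arithmetic $\mathsf{PA}$ in the language of first-order arithmetic; $\ulcorner\varphi\urcorner$ denotes the numeral of the Gödel number of $\varphi$. A provability predicate of $T$ is a formula $\mathrm{Pr}_T(x)$ such that for every $n\in\omega$, $\mathsf{PA}\vdash\mathrm{Pr}_T(\overline{n})$ iff $n$ is the Gödel number of a theorem of $T$. Condition $\mathbf{M}$: if $T\vdash\varphi\to\psi$ then $T\vdash\mathrm{Pr}_T(\ulcorner\varphi\urcorner)\to\mathrm{Pr}_T(\ulcorner\psi\urcorner)$. Condition $\mathbf{D3}$: $T\vdash\mathrm{Pr}_T(\ulcorner\varphi\urcorner)\to\mathrm{Pr}_T(\ulcorner\mathrm{Pr}_T(\ulcorner\varphi\urcorner)\urcorner)$ for every formula $\varphi$. The modal language has propositional variables, $\bot$, $\to$, $\Box$. An arithmetical interpretation based on $\mathrm{Pr}_T$ is a map $f$ from modal formulas to arithmetic sentences (arbitrary on propositional variables) with $f(\bot)$ being $0=1$, $f(A\to B)=f(A)\to f(B)$, $f(\Box A)=\mathrm{Pr}_T(\ulcorner f(A)\urcorner)$. $\mathsf{PL}(\mathrm{Pr}_T)$ is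 the set of modal formulas $A$ such that $T\vdash f(A)$ for all arithmetical interpretations $f$ based on $\mathrm{Pr}_T$. $\mathsf{MN}$ is the modal logic with all tautologies as axioms and rules modus ponens, necessitation ($A/\Box A$) and RM ($A\to B/\Box A\to\Box B$); $\mathsf{MNF}$ is $\mathsf{MN}$ plus the scheme $\Box A\to\Box\Box A$. *)

theory Defs
  imports Main "HOL-Library.Nat_Bijection"
begin

section \<open>Language of first-order arithmetic (de Bruijn indices)\<close>

datatype trm = Var nat | Zer | Sc trm | Pl trm trm | Tm trm trm

datatype fm = Eq trm trm | Neg fm | Imp fm fm | All fm

fun lift_trm :: "nat \<Rightarrow> trm \<Rightarrow> trm" where
  "lift_trm k (Var i) = (if i < k then Var i else Var (Suc i))"
| "lift_trm k Zer = Zer"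
| "lift_trm k (Sc t) = Sc (lift_trm k t)"
| "lift_trm k (Pl s t) = Pl (lift_trm k s) (lift_trm k t)"
| "lift_trm k (Tm s t) = Tm (lift_trm k s) (lift_trm k t)"

fun lift_fm :: "nat \<Rightarrow> fm \<Rightarrow> fm" where
  "lift_fm k (Eq s t) = Eq (lift_trm k s) (lift_trm k t)"
| "lift_fm k (Neg A) = Neg (lift_fm k A)"
| "lift_fm k (Imp A B) = Imp (lift_fm k A) (lift_fm k B)"
| "lift_fm k (All A) = All (lift_fm (Suc k) A)"

fun subst_trm :: "nat \<Rightarrow> trm \<Rightarrow> trm \<Rightarrow> trm" where
  "subst_trm k s (Var i) = (if i < k then Var i else if i = k then s else Var (i - 1))"
| "subst_trm k s Zer = Zer"
| "subst_trm k s (Sc t) = Sc (subst_trm k s t)"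
| "subst_trm k s (Pl t u) = Pl (subst_trm k s t) (subst_trm k s u)"
| "subst_trm k s (Tm t u) = Tm (subst_trm k s t) (subst_trm k s u)"

fun subst_fm :: "nat \<Rightarrow> trm \<Rightarrow> fm \<Rightarrow> fm" where
  "subst_fm k s (Eq t u) = Eq (subst_trm k s t) (subst_trm k s u)"
| "subst_fm k s (Neg A) = Neg (subst_fm k s A)"
| "subst_fm k s (Imp A B) = Imp (subst_fm k s A) (subst_fm k s B)"
| "subst_fm k s (All A) = All (subst_fm (Suc k) (lift_trm 0 s) A)"

fun closed_trm :: "nat \<Rightarrow> trm \<Rightarrow> bool" where
  "closed_trm n (Var i) = (i < n)"
| "closed_trm n Zer = True"
| "closed_trm n (Sc t) = closed_trm n t"
| "closed_trm n (Pl s t) = (closed_trm n s \<and> closed_trm n t)"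
| "closed_trm n (Tm s t) = (closed_trm n s \<and> closed_trm n t)"

fun closed_fm :: "nat \<Rightarrow> fm \<Rightarrow> bool" where
  "closed_fm n (Eq s t) = (closed_trm n s \<and> closed_trm n t)"
| "closed_fm n (Neg A) = closed_fm n A"
| "closed_fm n (Imp A B) = (closed_fm n A \<and> closed_fm n B)"
| "closed_fm n (All A) = closed_fm (Suc n) A"

definition sentence :: "fm \<Rightarrow> bool" where
  "sentence A \<longleftrightarrow> closed_fm 0 A"

text \<open>Propositional tautologies: atoms are equations and universal formulas.\<close>
fun peval :: "(fm \<Rightarrow> bool) \<Rightarrow> fm \<Rightarrow> bool" where
  "peval v (Eq s t) = v (Eq s t)"
| "peval v (Neg A) = (\<not> peval v A)"
| "peval v (Imp A B) = (peval v A \<longrightarrow> peval v B)"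
| "peval v (All A) = v (All A)"

definition taut :: "fm \<Rightarrow> bool" where
  "taut A \<longleftrightarrow> (\<forall>v. peval v A)"

inductive prv :: "fm set \<Rightarrow> fm \<Rightarrow> bool" for Ax :: "fm set" where
  ax: "A \<in> Ax \<Longrightarrow> prv Ax A"
| taut: "taut A \<Longrightarrow> prv Ax A"
| all_inst: "prv Ax (Imp (All A) (subst_fm 0 t A))"
| all_lift: "prv Ax (Imp A (All (lift_fm 0 A)))"
| all_dist: "prv Ax (Imp (All (Imp A B)) (Imp (All A) (All B)))"
| eq_refl: "prv Ax (Eq t t)"
| eq_subst: "prv Ax (Imp (Eq s t) (Imp (subst_fm 0 s A) (subst_fm 0 t A)))"
| mp: "prv Ax (Imp A B) \<Longrightarrow> prv Ax A \<Longrightarrow> prv Ax B"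
| gen: "prv Ax A \<Longrightarrow> prv Ax (All A)"

inductive_set PA_ax :: "fm set" where
  "Neg (Eq (Sc (Var 0)) Zer) \<in> PA_ax"
| "Imp (Eq (Sc (Var 0)) (Sc (Var 1))) (Eq (Var 0) (Var 1)) \<in> PA_ax"
| "Eq (Pl (Var 0) Zer) (Var 0) \<in> PA_ax"
| "Eq (Pl (Var 0) (Sc (Var 1))) (Sc (Pl (Var 0) (Var 1))) \<in> PA_ax"
| "Eq (Tm (Var 0) Zer) Zer \<in> PA_ax"
| "Eq (Tm (Var 0) (Sc (Var 1))) (Pl (Tm (Var 0) (Var 1)) (Var 0)) \<in> PA_ax"
| "Imp (subst_fm 0 Zer A)
       (Imp (All (Imp A (subst_fm 0 (Sc (Var 0)) (lift_fm 1 A)))) (All A)) \<in> PA_ax"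

fun gn_trm :: "trm \<Rightarrow> nat" where
  "gn_trm (Var i) = prod_encode (0, i)"
| "gn_trm Zer = prod_encode (1, 0)"
| "gn_trm (Sc t) = prod_encode (2, gn_trm t)"
| "gn_trm (Pl s t) = prod_encode (3, prod_encode (gn_trm s, gn_trm t))"
| "gn_trm (Tm s t) = prod_encode (4, prod_encode (gn_trm s, gn_trm t))"

fun gn :: "fm \<Rightarrow> nat" where
  "gn (Eq s t) = prod_encode (0, prod_encode (gn_trm s, gn_trm t))"
| "gn (Neg A) = prod_encode (1, gn A)"
| "gn (Imp A B) = prod_encode (2, prod_encode (gn A, gn B))"
| "gn (All A) = prod_encode (3, gn A)"

fun num :: "nat \<Rightarrow> trm" where
  "num 0 = Zer"
| "num (Suc n) = Sc (num n)"

definition quot :: "fm \<Rightarrow> trm" where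
  "quot A = num (gn A)"

definition inst :: "fm \<Rightarrow> trm \<Rightarrow> fm" where
  "inst P t = subst_fm 0 t P"

definition prim_rec_op :: "(nat list \<Rightarrow> nat) \<Rightarrow> (nat list \<Rightarrow> nat) \<Rightarrow> nat list \<Rightarrow> nat" where
  "prim_rec_op g h xs = rec_nat (g (tl xs)) (\<lambda>k r. h (k # r # tl xs)) (hd xs)"

inductive PRF :: "nat \<Rightarrow> (nat list \<Rightarrow> nat) \<Rightarrow> bool" where
  zero: "PRF n (\<lambda>_. 0)"
| succ: "PRF 1 (\<lambda>xs. Suc (hd xs))"
| proj: "i < n \<Longrightarrow> PRF n (\<lambda>xs. xs ! i)"
| comp: "PRF m g \<Longrightarrow> length hs = m \<Longrightarrow> (\<forall>h\<in>set hs. PRF n h)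
         \<Longrightarrow> PRF n (\<lambda>xs. g (map (\<lambda>h. h xs) hs))"
| prec: "PRF n g \<Longrightarrow> PRF (n + 2) h \<Longrightarrow> PRF (Suc n) (prim_rec_op g h)"

definition prim_rec_set :: "nat set \<Rightarrow> bool" where
  "prim_rec_set S \<longleftrightarrow> (\<exists>f. PRF 1 f \<and> (\<forall>x. f [x] = (if x \<in> S then 1 else 0)))"

definition consistent :: "fm set \<Rightarrow> bool" where
  "consistent Ax \<longleftrightarrow> \<not> (\<exists>A. prv Ax A \<and> prv Ax (Neg A))"

definition good_theory :: "fm set \<Rightarrow> bool" where
  "good_theory Ax \<longleftrightarrow> prim_rec_set (gn ` Ax) \<and> consistent Ax
     \<and> (\<forall>A. prv PA_ax A \<longrightarrow> prv Ax A)"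

definition provability_predicate :: "fm set \<Rightarrow> fm \<Rightarrow> bool" where
  "provability_predicate Ax P \<longleftrightarrow> closed_fm 1 P \<and>
     (\<forall>n. prv PA_ax (inst P (num n)) \<longleftrightarrow> (\<exists>A. n = gn A \<and> prv Ax A))"

definition Pr :: "fm \<Rightarrow> fm \<Rightarrow> fm" where
  "Pr P A = inst P (quot A)"

definition cond_M :: "fm set \<Rightarrow> fm \<Rightarrow> bool" where
  "cond_M Ax P \<longleftrightarrow> (\<forall>A B. sentence A \<longrightarrow> sentence B \<longrightarrow>
     prv Ax (Imp A B) \<longrightarrow> prv Ax (Imp (Pr P A) (Pr P B)))"

definition cond_D3 :: "fm set \<Rightarrow> fm \<Rightarrow> bool" where
  "cond_D3 Ax P \<longleftrightarrow> (\<forall>A. sentence A \<longrightarrow>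
     prv Ax (Imp (Pr P A) (Pr P (Pr P A))))"

datatype mfm = PVar nat | MBot | MImp mfm mfm | Box mfm

fun meval :: "(mfm \<Rightarrow> bool) \<Rightarrow> mfm \<Rightarrow> bool" where
  "meval v (PVar n) = v (PVar n)"
| "meval v MBot = False"
| "meval v (MImp A B) = (meval v A \<longrightarrow> meval v B)"
| "meval v (Box A) = v (Box A)"

definition mtaut :: "mfm \<Rightarrow> bool" where
  "mtaut A \<longleftrightarrow> (\<forall>v. meval v A)"

inductive_set MN :: "mfm set" where
  taut: "mtaut A \<Longrightarrow> A \<in> MN"
| mp: "MImp A B \<in> MN \<Longrightarrow> A \<in> MN \<Longrightarrow> B \<in> MN"
| nec: "A \<in> MN \<Longrightarrow> Box A \<in> MN"
| rm: "MImp A B \<in> MN \<Longrightarrow> MImp (Box A) (Box B) \<in> MN"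

inductive_set MNF :: "mfm set" where
  taut: "mtaut A \<Longrightarrow> A \<in> MNF"
| four: "MImp (Box A) (Box (Box A)) \<in> MNF"
| mp: "MImp A B \<in> MNF \<Longrightarrow> A \<in> MNF \<Longrightarrow> B \<in> MNF"
| nec: "A \<in> MNF \<Longrightarrow> Box A \<in> MNF"
| rm: "MImp A B \<in> MNF \<Longrightarrow> MImp (Box A) (Box B) \<in> MNF"

fun interp :: "fm \<Rightarrow> (nat \<Rightarrow> fm) \<Rightarrow> mfm \<Rightarrow> fm" where
  "interp P f (PVar n) = f n"
| "interp P f MBot = Eq Zer (Sc Zer)"
| "interp P f (MImp A B) = Imp (interp P f A) (interp P f B)"
| "interp P f (Box A) = Pr P (interp P f A)"

definition PL :: "fm set \<Rightarrow> fm \<Rightarrow> mfm set" where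
  "PL Ax P = {A. \<forall>f. (\<forall>n. sentence (f n)) \<longrightarrow> prv Ax (interp P f A)}"

end

theory Submission
  imports Defs
begin

text \<open>Each rule of \<open>MN\<close> is sound for arithmetical interpretations: tautologies
  because \<open>PA\<close> refutes \<open>0 = 1\<close>, necessitation because \<open>Pr\<^sub>T\<close> is a provability
  predicate and \<open>T\<close> extends \<open>PA\<close>, and RM is exactly condition \<open>M\<close>.  Adding the
  axiom \<open>\<box>A \<rightarrow> \<box>\<box>A\<close> is sound precisely when \<open>D3\<close> holds, since interpreting
  a propositional variable by an arbitrary sentence turns that axiom into an
  arbitrary instance of \<open>D3\<close>.\<close>

lemma closed_lift_trm: "closed_trm n s \<Longrightarrow> closed_trm (Suc n) (lift_trm k s)"
  by (induct s) auto

lemma closed_subst_trm: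
  "closed_trm (Suc n) t \<Longrightarrow> closed_trm n s \<Longrightarrow> k \<le> n \<Longrightarrow> closed_trm n (subst_trm k s t)"
  by (induct t) auto

lemma closed_subst_fm:
  "closed_fm (Suc n) A \<Longrightarrow> closed_trm n s \<Longrightarrow> k \<le> n \<Longrightarrow> closed_fm n (subst_fm k s A)"
  by (induct A arbitrary: n k s) (auto simp: closed_subst_trm closed_lift_trm)

lemma closed_num: "closed_trm n (num m)"
  by (induct m) auto

lemma sentence_Pr: "closed_fm 1 P \<Longrightarrow> sentence (Pr P A)"
  unfolding sentence_def Pr_def inst_def quot_def
  by (rule closed_subst_fm) (auto simp: closed_num)

lemma sentence_interp:
  "closed_fm 1 P \<Longrightarrow> (\<And>n. sentence (f n)) \<Longrightarrow> sentence (interp P f A)"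
  by (induct A) (auto simp: sentence_def sentence_Pr[unfolded sentence_def])

lemma PA_prv_zero_neq_one: "prv PA_ax (Neg (Eq Zer (Sc Zer)))"
proof -
  have "prv PA_ax (All (Neg (Eq (Sc (Var 0)) Zer)))"
    by (intro prv.gen prv.ax PA_ax.intros)
  moreover have "prv PA_ax (Imp (All (Neg (Eq (Sc (Var 0)) Zer))) (Neg (Eq (Sc Zer) Zer)))"
    using prv.all_inst[of PA_ax "Neg (Eq (Sc (Var 0)) Zer)" Zer] by simp
  ultimately have one_neq_zero: "prv PA_ax (Neg (Eq (Sc Zer) Zer))"
    by (rule prv.mp[rotated])
  have eq_sym: "prv PA_ax (Imp (Eq Zer (Sc Zer)) (Imp (Eq Zer Zer) (Eq (Sc Zer) Zer)))"
    using prv.eq_subst[of PA_ax Zer "Sc Zer" "Eq (Var 0) Zer"] by simp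
  have "taut (Imp (Imp X (Imp Y Z)) (Imp Y (Imp (Neg Z) (Neg X))))" for X Y Z
    by (auto simp: taut_def)
  then show ?thesis
    using prv.taut prv.mp eq_sym prv.eq_refl one_neq_zero by meson
qed

lemma meval_interp:
  assumes "\<not> v (Eq Zer (Sc Zer))"
  shows "meval (\<lambda>B. peval v (interp P f B)) A = peval v (interp P f A)"
  using assms by (induct A) (auto simp: Pr_def)

text \<open>The interpretation of \<open>\<bottom>\<close> is the atom \<open>0 = 1\<close>, which some valuations make
  true; so a modal tautology only becomes a tautology relative to \<open>\<not> 0 = 1\<close>.\<close>

lemma taut_interp_mtaut:
  assumes "mtaut A"
  shows "taut (Imp (Neg (Eq Zer (Sc Zer))) (interp P f A))"
  using assms meval_interp[of _ P f A] by (auto simp: taut_def mtaut_def)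

lemma mtaut_in_PL:
  assumes "\<forall>A. prv PA_ax A \<longrightarrow> prv Ax A" and "mtaut A"
  shows "A \<in> PL Ax P"
  unfolding PL_def
  using prv.mp[OF prv.taut[OF taut_interp_mtaut[OF assms(2)]]] assms(1) PA_prv_zero_neq_one
  by blast

lemma PL_mp: "MImp A B \<in> PL Ax P \<Longrightarrow> A \<in> PL Ax P \<Longrightarrow> B \<in> PL Ax P"
  by (auto simp: PL_def intro: prv.mp)

lemma provability_predicate_closed: "provability_predicate Ax P \<Longrightarrow> closed_fm 1 P"
  by (simp add: provability_predicate_def)

lemma prv_Pr:
  assumes "\<forall>A. prv PA_ax A \<longrightarrow> prv Ax A" and "provability_predicate Ax P" and "prv Ax A"
  shows "prv Ax (Pr P A)"
  using assms unfolding provability_predicate_def Pr_def quot_def by blast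

lemma PL_nec:
  assumes "\<forall>A. prv PA_ax A \<longrightarrow> prv Ax A" and "provability_predicate Ax P"
  shows "A \<in> PL Ax P \<Longrightarrow> Box A \<in> PL Ax P"
  using prv_Pr[OF assms] by (simp add: PL_def)

lemma PL_rm:
  assumes "closed_fm 1 P" and "cond_M Ax P"
  shows "MImp A B \<in> PL Ax P \<Longrightarrow> MImp (Box A) (Box B) \<in> PL Ax P"
  using assms sentence_interp[OF assms(1)] by (simp add: PL_def cond_M_def)

lemma cond_D3_iff_four_in_PL:
  assumes "closed_fm 1 P"
  shows "cond_D3 Ax P \<longleftrightarrow> (\<forall>A. MImp (Box A) (Box (Box A)) \<in> PL Ax P)"
proof
  assume "cond_D3 Ax P"
  then show "\<forall>A. MImp (Box A) (Box (Box A)) \<in> PL Ax P"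
    using sentence_interp[OF assms] by (simp add: PL_def cond_D3_def)
next
  assume four: "\<forall>A. MImp (Box A) (Box (Box A)) \<in> PL Ax P"
  show "cond_D3 Ax P"
    unfolding cond_D3_def
  proof (intro allI impI)
    fix A assume "sentence A"
    with four[rule_format, of "PVar 0"] show "prv Ax (Imp (Pr P A) (Pr P (Pr P A)))"
      unfolding PL_def by (auto dest: spec[of _ "\<lambda>_. A"])
  qed
qed

lemma MN_subset_PL:
  assumes "\<forall>A. prv PA_ax A \<longrightarrow> prv Ax A" and "provability_predicate Ax P" and "cond_M Ax P"
  shows "MN \<subseteq> PL Ax P"
proof
  note closed = provability_predicate_closed[OF assms(2)]
  fix A assume "A \<in> MN"
  then show "A \<in> PL Ax P"
    by induct
      (auto intro: mtaut_in_PL[OF assms(1)] PL_mp PL_nec[OF assms(1,2)]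
        PL_rm[OF closed assms(3)])
qed

lemma MNF_subset_PL:
  assumes "\<forall>A. prv PA_ax A \<longrightarrow> prv Ax A" and "provability_predicate Ax P" and "cond_M Ax P"
    and "\<forall>A. MImp (Box A) (Box (Box A)) \<in> PL Ax P"
  shows "MNF \<subseteq> PL Ax P"
proof
  note closed = provability_predicate_closed[OF assms(2)]
  fix A assume "A \<in> MNF"
  then show "A \<in> PL Ax P"
    by induct
      (auto intro: mtaut_in_PL[OF assms(1)] PL_mp PL_nec[OF assms(1,2)]
        PL_rm[OF closed assms(3)] simp: assms(4))
qed

theorem proposition4p1:
  fixes Ax :: "fm set" and P :: fm
  assumes "good_theory Ax"
    and "provability_predicate Ax P"
    and "cond_M Ax P"
  shows "MN \<subseteq> PL Ax P \<and> (cond_D3 Ax P \<longleftrightarrow> MNF \<subseteq> PL Ax P)"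
proof -
  have PA: "\<forall>A. prv PA_ax A \<longrightarrow> prv Ax A"
    using assms(1) by (simp add: good_theory_def)
  have D3: "cond_D3 Ax P \<longleftrightarrow> (\<forall>A. MImp (Box A) (Box (Box A)) \<in> PL Ax P)"
    using provability_predicate_closed[OF assms(2)] by (rule cond_D3_iff_four_in_PL)
  show ?thesis
    using MN_subset_PL[OF PA assms(2,3)] MNF_subset_PL[OF PA assms(2,3)] MNF.four D3
    by blast
qed

end
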